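(* Let $q$ be a prime power, $m>3$, and $n=q^m-1$. For an integer design distance $d\ge 2$, the primitive narrow-sense bicyclic hyperbolic code $\mathscr{H}(n\times n,q;d)$ over $\mathbb{F}_q$ contains its Euclidean dual if and only if $d\le\delta$, where $$\delta=\begin{cases}(q^m-1)-2(q^{m/2}-1)=(q^{m/2}-1)^2 & m \text{ even},\\ (q^m-1)-q^{(m-1)/2} & m\text{ odd}.\end{cases}$$
   Context: Bicyclic codes: linear subspaces of $\mathbb{F}_q^{n\times n}$ closed under cyclic shifts of rows and columns, identified with ideals of $\mathbb{F}_q[X,Y]/\langle X^n-1,Y^n-1\rangle$ via $c\mapsto c(X,Y)=\sum c_{i,j}X^iY^j$. Let $\alpha$ be a primitive $n$-th root of unity in $\mathbb{F}_{q^m}$. The $q$-ary cyclotomic coset of $(x,y)$ is $\mathrm{Coset}_{(x,y)}=\{(xq^k\bmod n, yq^k\bmod n):k\ge0\}$. The primitive narrow-sense bicyclic hyperbolic code $\mathscr{H}(n\times n,q;d)$ with design distance $d$ is the set of all $c\in\mathbb{F}_q^{n\times n}$ with $c(\alpha^x,\alpha^y)=0$ for all $(x,y)\in Z=\bigcup_{(x,y)\in Z_{des}}\mathrm{Coset}_{(x,y)}$, where the designed set is $Z_{des}=\{(x\bmod n,\ y\bmod n): 1\le x,y\le n,\ xy<d\}$. The Euclidean dual of $C$ is $C^\perp=\{u\in\mathbb{F}_q^{n\times n}:\sum_{i,j}u_{i,j}v_{i,j}=0\ \forall v\in C\}$. *)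

theory Defs
  imports Main "HOL-Computational_Algebra.Primes"
begin

definition arrays :: "nat \<Rightarrow> (nat \<Rightarrow> nat \<Rightarrow> 'a::zero) set" where
  "arrays n = {c. \<forall>i j. (n \<le> i \<or> n \<le> j) \<longrightarrow> c i j = 0}"

text \<open>c(alpha^x, alpha^y), with the coefficients embedded by phi into the extension field.\<close>
definition bicyc_eval ::
  "('a \<Rightarrow> 'b::comm_ring_1) \<Rightarrow> 'b \<Rightarrow> nat \<Rightarrow> (nat \<Rightarrow> nat \<Rightarrow> 'a) \<Rightarrow> nat \<Rightarrow> nat \<Rightarrow> 'b" where
  "bicyc_eval \<phi> \<alpha> n c x y = (\<Sum>i<n. \<Sum>j<n. \<phi> (c i j) * \<alpha> ^ (i * x) * \<alpha> ^ (j * y))"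

definition cyc_coset :: "nat \<Rightarrow> nat \<Rightarrow> nat \<Rightarrow> nat \<Rightarrow> (nat \<times> nat) set" where
  "cyc_coset q n x y = {((x * q ^ k) mod n, (y * q ^ k) mod n) | k. True}"

definition designed_set :: "nat \<Rightarrow> nat \<Rightarrow> (nat \<times> nat) set" where
  "designed_set n d = {(x mod n, y mod n) | x y. 1 \<le> x \<and> x \<le> n \<and> 1 \<le> y \<and> y \<le> n \<and> x * y < d}"

definition hyperbolic_zeros :: "nat \<Rightarrow> nat \<Rightarrow> nat \<Rightarrow> (nat \<times> nat) set" where
  "hyperbolic_zeros q n d = (\<Union>(x, y)\<in>designed_set n d. cyc_coset q n x y)"

definition hyperbolic_code ::
  "('a::zero \<Rightarrow> 'b::comm_ring_1) \<Rightarrow> 'b \<Rightarrow> nat \<Rightarrow> nat \<Rightarrow> nat \<Rightarrow> (nat \<Rightarrow> nat \<Rightarrow> 'a) set" where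
  "hyperbolic_code \<phi> \<alpha> q n d =
     {c \<in> arrays n. \<forall>(x, y)\<in>hyperbolic_zeros q n d. bicyc_eval \<phi> \<alpha> n c x y = 0}"

definition euclid_dual :: "nat \<Rightarrow> (nat \<Rightarrow> nat \<Rightarrow> 'a::comm_ring) set \<Rightarrow> (nat \<Rightarrow> nat \<Rightarrow> 'a) set" where
  "euclid_dual n C = {u \<in> arrays n. \<forall>v\<in>C. (\<Sum>i<n. \<Sum>j<n. u i j * v i j) = 0}"

end

(*
  The duality is governed by the trace of F_(q^m) over F_q.  For (x, y) in the zero set Z and
  any beta, the array Tr(beta alpha^(ix + jy)) is orthogonal to the code, and its value at
  (alpha^a, alpha^b) is a q-polynomial in beta which is nonzero iff (a, b) is antipodal
  (x + a = y + b = 0 mod n) to a point of the q-coset of (x, y).  As Z is a union of q-cosets,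
  the dual lies in the code iff Z contains no antipodal pair.

  Normalising an antipodal pair by a power of q, its designed points (X, Y), (X', Y') satisfy
  n <= X + q^k X' and n <= q^(m-k) X + X', and likewise for Y; elementary inequalities then
  give X Y >= delta or X' Y' >= delta, so there is no such pair when d <= delta.  For d > delta
  explicit antipodal pairs exist.
*)
theory Submission
  imports Defs "HOL-Number_Theory.Residues" "HOL-Computational_Algebra.Polynomial"
begin

lemma complement_product_ge:
  fixes Q n t :: int
  assumes "Q - 1 \<le> t" "t \<le> n - Q + 1"
  shows "(Q - 1) * (n - Q + 1) \<le> t * (n - t)"
proof -
  have "t * (n - t) - (Q - 1) * (n - Q + 1) = (t - Q + 1) * (n - Q + 1 - t)"
    by (simp add: algebra_simps)
  moreover have "(t - Q + 1) * (n - Q + 1 - t) \<ge> 0" using assms by simp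
  ultimately show ?thesis by linarith
qed

lemma product_of_complements_ge:
  fixes n x x' y y' :: int
  assumes "n \<le> x + x'" "n \<le> y + y'" "1 \<le> x" "1 \<le> y" "x * y < n"
  shows "n - 1 \<le> x' * y'"
proof -
  have le: "x \<le> x * y" "y \<le> x * y" using assms(3,4) by simp_all
  then have "(n - x) * (n - y) \<le> x' * y'"
    using assms by (intro mult_mono) linarith+
  moreover have "(n - x) * (n - y) = (n - 1) * (n - x * y) + n * ((x - 1) * (y - 1))"
    by (simp add: algebra_simps)
  moreover have "n * ((x - 1) * (y - 1)) \<ge> 0"
    using assms le by (intro mult_nonneg_nonneg) linarith+
  moreover have "n - 1 \<le> (n - 1) * (n - x * y)"
    using assms le by (subst mult_le_cancel_left1) linarith
  ultimately show ?thesis by linarith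
qed

lemma even_partner_ge:
  fixes Q K K' u u' n :: int
  assumes Q: "Q \<ge> 2" and KK: "K * K' = Q^2" and K: "K \<ge> 1" "K' \<ge> 1" and n: "n = Q^2 - 1"
    and c: "n \<le> u + K * u'" "n \<le> K' * u + u'"
    and u: "u \<ge> 1" "u' \<ge> 1" "u \<le> Q - 2"
  shows "Q - 1 \<le> u'"
proof (cases "K' \<le> Q")
  case True
  have "K' * u \<le> Q * (Q - 2)" using True u K by (intro mult_mono) auto
  moreover have "Q * (Q - 2) = Q^2 - 2*Q" by (simp add: power2_eq_square algebra_simps)
  ultimately show ?thesis using c n Q by linarith
next
  case False
  have "K < Q"
  proof (rule ccontr)
    assume "\<not> K < Q"
    then have "Q * Q < K * K'" using False Q mult_le_less_imp_less[of Q K Q K'] by auto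
    then show False using KK by (simp add: power2_eq_square)
  qed
  show ?thesis
  proof (rule ccontr)
    assume "\<not> Q - 1 \<le> u'"
    then have "K * u' \<le> (Q - 1) * (Q - 2)" using \<open>K < Q\<close> K u by (intro mult_mono) auto
    moreover have "(Q - 1) * (Q - 2) = Q^2 - 3*Q + 2" by (simp add: power2_eq_square algebra_simps)
    ultimately show False using c n u Q by linarith
  qed
qed

lemma cross_product_ge:
  fixes Q n K K' a a' b b' :: int
  assumes KK: "K * K' = n + 1" and ca: "n \<le> K * a + a'" and cb: "n \<le> b + K' * b'"
    and a: "0 \<le> a" "Q - 1 \<le> a'" "a' \<le> n - Q + 1"
    and b: "0 \<le> b'" "Q - 1 \<le> b" "b \<le> n - Q + 1" and Q: "Q \<ge> 1"
  shows "((Q - 1) * (n - Q + 1))^2 \<le> (n + 1) * (a * b') * (a' * b)"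
proof -
  define F where "F = (Q - 1) * (n - Q + 1)"
  have "(n - a') * (n - b) \<le> (K * a) * (K' * b')"
    using ca cb a b Q by (intro mult_mono) auto
  also have "(K * a) * (K' * b') = (n + 1) * (a * b')"
    by (simp add: KK flip: mult.assoc)
  finally have "(n - a') * (n - b) \<le> (n + 1) * (a * b')" .
  then have "(n - a') * (n - b) * (a' * b) \<le> (n + 1) * (a * b') * (a' * b)"
    using a b Q by (intro mult_right_mono) auto
  moreover have "F * F \<le> (a' * (n - a')) * (b * (n - b))"
    unfolding F_def using a b Q
    by (intro mult_mono complement_product_ge) auto
  ultimately show ?thesis unfolding F_def by (simp add: power2_eq_square algebra_simps)
qed

lemma even_product_bound:
  fixes Q K K' x x' y y' n :: int
  assumes Q: "Q \<ge> 2" and n: "n = Q^2 - 1" and KK: "K * K' = Q^2" and K: "K \<ge> 1" "K' \<ge> 1"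
    and cx: "n \<le> x + K * x'" "n \<le> K' * x + x'"
    and cy: "n \<le> y + K * y'" "n \<le> K' * y + y'"
    and pos: "x \<ge> 1" "x' \<ge> 1" "y \<ge> 1" "y' \<ge> 1"
  shows "(Q - 1)^2 \<le> x * y \<or> (Q - 1)^2 \<le> x' * y'"
proof (rule ccontr)
  assume "\<not> ?thesis"
  then have P: "x * y < (Q - 1)^2" "x' * y' < (Q - 1)^2" by auto
  have "(Q - 1)^2 \<le> n - Q + 1" using n Q by (simp add: power2_eq_square algebra_simps)
  moreover have "x \<le> x * y" "y \<le> x * y" "x' \<le> x' * y'" "y' \<le> x' * y'"
    using pos by simp_all
  ultimately have ub: "x \<le> n - Q + 1" "y \<le> n - Q + 1" "x' \<le> n - Q + 1" "y' \<le> n - Q + 1"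
    using P by linarith+
  have "(x * y) * (x' * y') < (Q - 1)^2 * (Q - 1)^2"
    using P pos Q by (intro mult_strict_mono) auto
  then have "(n + 1) * (x * y) * (x' * y') < Q^2 * ((Q - 1)^2 * (Q - 1)^2)"
    using Q n by (simp add: mult.assoc)
  also have "\<dots> = ((Q - 1) * (n - Q + 1))^2"
    using n by (simp add: power2_eq_square algebra_simps)
  finally have PP: "(n + 1) * (x * y) * (x' * y') < ((Q - 1) * (n - Q + 1))^2" .
  have KK': "K' * K = n + 1" "K * K' = n + 1" using KK n by (simp_all add: mult.commute)
  have no_large_x'_y: "\<not> (Q - 1 \<le> x' \<and> Q - 1 \<le> y)"
    using cross_product_ge[where Q=Q, OF KK'(1) cx(2) cy(1)] pos ub PP Q
    by (auto simp: algebra_simps)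
  have no_large_x_y': "\<not> (Q - 1 \<le> x \<and> Q - 1 \<le> y')"
    using cross_product_ge[where Q=Q, OF KK'(2), of x' x y' y] cx(1) cy(2) pos ub PP Q
    by (auto simp: algebra_simps)
  have "x \<le> Q - 2 \<Longrightarrow> Q - 1 \<le> x'" "y \<le> Q - 2 \<Longrightarrow> Q - 1 \<le> y'"
    using even_partner_ge[OF Q KK K n] cx cy pos by auto
  moreover have "x' \<le> Q - 2 \<Longrightarrow> Q - 1 \<le> x" "y' \<le> Q - 2 \<Longrightarrow> Q - 1 \<le> y"
    using even_partner_ge[OF Q _ K(2,1) n, of x' x] even_partner_ge[OF Q _ K(2,1) n, of y' y]
      KK cx cy pos by (auto simp: mult.commute add.commute)
  moreover have "Q - 1 \<le> a \<Longrightarrow> Q - 1 \<le> b \<Longrightarrow> (Q - 1)^2 \<le> a * b" for a b :: int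
    using Q by (simp add: power2_eq_square mult_mono)
  ultimately show False
    using no_large_x'_y no_large_x_y' P by (smt (verit))
qed

text \<open>The odd case \<open>m = 2h + 1\<close>: \<open>Q0 = q^h\<close>, and \<open>L\<close>, \<open>L'\<close> are \<open>q^k\<close> and \<open>q^(m - k)\<close>,
  named so that \<open>L \<le> Q0\<close>.\<close>
locale odd_weights =
  fixes q Q0 n L L' :: int
  assumes q2: "q \<ge> 2" and Q4: "Q0 \<ge> 4" and n1: "n + 1 = q * Q0^2"
    and LL: "L * L' = n + 1" and L1: "L \<ge> 1" and LQ: "L \<le> Q0"
begin

lemma weights_bounds: "L^2 \<le> Q0^2" "2 * Q0^2 \<le> n + 1" "L < L'" "n \<ge> 31" "Q0 + 1 < n"
proof -
  show a: "L^2 \<le> Q0^2" using L1 LQ by (simp add: power_mono)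
  show b: "2 * Q0^2 \<le> n + 1" using n1 q2 by (simp add: mult_right_mono)
  have "Q0 \<le> Q0^2" using Q4 by (simp add: power2_eq_square)
  moreover have "Q0^2 \<ge> 16" using Q4 power_mono[of 4 Q0 2] by simp
  ultimately show "n \<ge> 31" "Q0 + 1 < n" using b by linarith+
  have "L * L < L * L'"
    using a b \<open>Q0^2 \<ge> 16\<close> LL by (simp add: power2_eq_square)
  then show "L < L'" using L1 by simp
qed

lemma product_bound_if_large:
  fixes x x' y y' :: int
  assumes cx: "n \<le> L * x + x'" "n \<le> x + L' * x'"
    and cy: "n \<le> L * y + y'" "n \<le> y + L' * y'"
    and pos: "x \<ge> 1" "x' \<ge> 1" "y \<ge> 1" "y' \<ge> 1"
    and L2: "L \<ge> 2" and hx: "x \<ge> L'"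
  shows "n - Q0 \<le> x * y \<or> n - Q0 \<le> x' * y'"
proof (rule ccontr)
  assume "\<not> ?thesis"
  then have P: "x * y < n - Q0" and P': "x' * y' < n - Q0" by auto
  note facts = weights_bounds
  have "L' * y \<le> x * y" using hx pos by (simp add: mult_right_mono)
  then have "L' * y < L' * L" using P LL Q4 by (simp add: mult.commute)
  then have "y \<le> L - 1" using facts L1 by simp
  then have "L * y \<le> L * (L - 1)" using L1 by (simp add: mult_left_mono)
  then have y'_ge: "n - L * (L - 1) \<le> y'" using cy by linarith
  have LL1: "L * (L - 1) \<le> Q0^2" using facts(1) L1 by (simp add: power2_eq_square algebra_simps)
  show False
  proof (cases "x' \<ge> 2")
    case True
    have "2 * n - 2 * (L * (L - 1)) \<le> x' * y'"
      using mult_mono[OF True y'_ge] y'_ge LL1 facts pos by auto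
    then show False using P' LL1 facts Q4 by linarith
  next
    case False
    then have x'1: "x' = 1" using pos by simp
    then have x_ge: "n - L' \<le> x" using cx by simp
    show False
    proof (cases "y \<ge> 2")
      case True
      have "2 * n - 2 * L' \<le> x * y" using mult_mono[OF x_ge True] pos by auto
      moreover have "2 * L' \<le> L * L'" using L2 facts by (intro mult_right_mono) auto
      ultimately show False using P LL Q4 by linarith
    next
      case False
      then have "y = 1" using pos by simp
      then have "n - L \<le> y'" using cy by simp
      then show False using P' x'1 LQ by simp
    qed
  qed
qed

lemma both_small_gap:
  assumes L2: "L \<ge> 2"
  defines "B0 \<equiv> n + 1 - L" and "D \<equiv> n - Q0 - 1"
  shows "B0 * D < (n * B0 - L^2 * D) * (L - 1)"
proof (cases "L = 2")
  case True
  have "(n * B0 - L^2 * D) * (L - 1) - B0 * D = Q0 * (n + 3) - 3 * n + 3"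
    unfolding True B0_def D_def by (simp add: power2_eq_square algebra_simps)
  moreover have "4 * n + 12 \<le> Q0 * (n + 3)" using mult_right_mono[OF Q4, of "n + 3"] weights_bounds by simp
  ultimately show ?thesis using weights_bounds by linarith
next
  case False
  then have L3: "L \<ge> 3" using L2 by simp
  have L2le: "2 * L^2 \<le> n + 1" using weights_bounds by linarith
  have nn: "n * B0 - L^2 * D \<ge> 0"
  proof -
    have "L^2 * D \<le> L^2 * n" using D_def Q4 by (intro mult_left_mono) auto
    moreover have "L \<le> L^2" using L1 by (simp add: power2_eq_square)
    then have "L^2 \<le> B0" using L2le B0_def LQ weights_bounds by linarith
    then have "L^2 * n \<le> B0 * n" using weights_bounds by (intro mult_right_mono) auto
    ultimately show ?thesis by (simp add: mult.commute)
  qed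
  have "(n * B0 - L^2 * D) * (L - 1) \<ge> (n * B0 - L^2 * D) * 2"
    using nn L3 by (intro mult_left_mono) auto
  moreover have "(n * B0 - L^2 * D) * 2 > B0 * D"
  proof -
    have "2 * L^2 * D \<le> (n + 1) * D" using L2le D_def LQ weights_bounds by (intro mult_right_mono) auto
    moreover have "(2 * n + 2 - L) * D \<le> (2 * n + 2 - L) * (n - L - 1)"
      using D_def LQ weights_bounds by (intro mult_left_mono) auto
    moreover have "2 * n * (n + 1 - L) - (2 * n + 2 - L) * (n - L - 1) = 2 * n + n * L + L + 2 - L^2"
      by (simp add: power2_eq_square algebra_simps)
    moreover have "L^2 \<le> n * L" using weights_bounds L1 LQ by (simp add: power2_eq_square mult_right_mono)
    moreover have "(n * B0 - L^2 * D) * 2 - B0 * D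
        = 2 * n * (n + 1 - L) - (2 * L^2 * D - (n + 1) * D + (2 * n + 2 - L) * D)"
      unfolding B0_def by (simp add: algebra_simps)
    ultimately show ?thesis using weights_bounds L1 by linarith
  qed
  ultimately show ?thesis by linarith
qed

lemma product_bound_if_both_small:
  fixes x x' y y' :: int
  assumes cx: "n \<le> L * x + x'" and cy: "n \<le> L * y + y'"
    and pos: "x \<ge> 1" "x' \<ge> 1" "y \<ge> 1" "y' \<ge> 1"
    and L2: "L \<ge> 2" and hx: "x < L'" and hy: "y < L'"
  shows "n - Q0 \<le> x * y \<or> n - Q0 \<le> x' * y'"
proof (rule ccontr)
  assume neg: "\<not> ?thesis"
  define D where "D = n - Q0 - 1"
  have PD: "x * y \<le> D" "x' * y' \<le> D" using neg D_def by auto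
  note facts = weights_bounds
  define A where "A = L * x"
  define B where "B = L * y"
  define B0 where "B0 = n + 1 - L"
  have B0L: "B0 = L * (L' - 1)" unfolding B0_def using LL by (simp add: algebra_simps)
  have AB0: "A \<le> B0" unfolding A_def B0L using hx L1 by (intro mult_left_mono) auto
  have BB0: "B \<le> B0" unfolding B_def B0L using hy L1 by (intro mult_left_mono) auto
  have "(n - A) * (n - B) \<le> x' * y'"
    using cx cy AB0 BB0 B0_def L2 unfolding A_def B_def by (intro mult_mono) auto
  then have "B0 * ((n - A) * (n - B)) \<le> B0 * (x' * y')"
    using B0_def facts LQ Q4 by (intro mult_left_mono) auto
  also have "\<dots> \<le> B0 * D" using PD B0_def facts LQ Q4 by (intro mult_left_mono) auto
  finally have up: "B0 * ((n - A) * (n - B)) \<le> B0 * D" .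
  have iden: "B0 * ((n - A) * (n - B)) = (n * B0 - A * B) * (L - 1) + n * ((B0 - A) * (B0 - B))"
    unfolding B0_def by (simp add: algebra_simps)
  have "n * ((B0 - A) * (B0 - B)) \<ge> 0" using AB0 BB0 facts by simp
  moreover have ABle: "A * B \<le> L^2 * D"
  proof -
    have "A * B = L^2 * (x * y)" unfolding A_def B_def by (simp add: power2_eq_square algebra_simps)
    also have "\<dots> \<le> L^2 * D" using PD by (intro mult_left_mono) auto
    finally show ?thesis .
  qed
  moreover have "(n * B0 - A * B) * (L - 1) \<ge> (n * B0 - L^2 * D) * (L - 1)"
    using ABle L1 by (intro mult_right_mono) auto
  moreover have "B0 * D < (n * B0 - L^2 * D) * (L - 1)"
    unfolding B0_def D_def using L2 by (rule both_small_gap)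
  ultimately show False using up iden by linarith
qed

lemma product_bound:
  fixes x x' y y' :: int
  assumes cx: "n \<le> L * x + x'" "n \<le> x + L' * x'"
    and cy: "n \<le> L * y + y'" "n \<le> y + L' * y'"
    and pos: "x \<ge> 1" "x' \<ge> 1" "y \<ge> 1" "y' \<ge> 1"
  shows "n - Q0 \<le> x * y \<or> n - Q0 \<le> x' * y'"
proof (cases "L = 1")
  case True
  then show ?thesis
    using product_of_complements_ge[of n x x' y y'] cx cy pos Q4 by force
next
  case False
  then have L2: "L \<ge> 2" using L1 by simp
  consider "L' \<le> x" "L' \<le> y" | "L' \<le> x" "y < L'" | "x < L'" "L' \<le> y" | "x < L'" "y < L'"
    by linarith
  then show ?thesis
  proof cases
    case 1
    then have "L' * L' \<le> x * y" using weights_bounds L1 by (intro mult_mono) auto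
    moreover have "L * L' \<le> L' * L'" using weights_bounds L1 by (intro mult_right_mono) auto
    ultimately show ?thesis using LL Q4 by linarith
  next
    case 2
    then show ?thesis using product_bound_if_large[OF cx cy pos L2] by blast
  next
    case 3
    then show ?thesis using product_bound_if_large[OF cy cx pos(3,4,1,2) L2] by (auto simp: mult.commute)
  next
    case 4
    then show ?thesis using product_bound_if_both_small[OF cx(1) cy(1) pos L2] by blast
  qed
qed

end

lemma odd_product_bound:
  fixes q Q0 n K K' x x' y y' :: int
  assumes q: "q \<ge> 2" "Q0 \<ge> 4" "n + 1 = q * Q0^2"
    and K: "K * K' = n + 1" "K \<ge> 1" "K' \<ge> 1" "K \<le> Q0 \<or> K' \<le> Q0"
    and cx: "n \<le> x + K * x'" "n \<le> K' * x + x'"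
    and cy: "n \<le> y + K * y'" "n \<le> K' * y + y'"
    and pos: "x \<ge> 1" "x' \<ge> 1" "y \<ge> 1" "y' \<ge> 1"
  shows "n - Q0 \<le> x * y \<or> n - Q0 \<le> x' * y'"
proof (cases "K' \<le> Q0")
  case True
  interpret odd_weights q Q0 n K' K
    using q K True by unfold_locales (auto simp: mult.commute)
  show ?thesis using product_bound[OF cx(2,1) cy(2,1) pos] .
next
  case False
  interpret odd_weights q Q0 n K K'
    using q K False by unfold_locales auto
  show ?thesis
    using product_bound[of x' x y' y] cx cy pos by (auto simp: add.commute mult.commute)
qed

(* The library version finite_field_power_card_eq_same is stated for the class finite_field. *)
lemma finite_field_power_card:
  fixes x :: "'a::{field,finite}"
  shows "x ^ card (UNIV :: 'a set) = x"
proof -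
  have "card (UNIV :: 'a set) > 0" by (rule finite_UNIV_card_ge_0) simp
  then obtain c where c: "card (UNIV :: 'a set) = Suc c" using gr0_implies_Suc by auto
  show ?thesis
  proof (cases "x = 0")
    case False
    let ?U = "UNIV - {0 :: 'a}"
    have "bij_betw ((*) x) ?U ?U"
      using False by (intro bij_betwI[of _ _ _ "(*) (inverse x)"]) auto
    then have "(\<Prod>y\<in>?U. x * y) = \<Prod>?U" by (rule prod.reindex_bij_betw)
    moreover have "card ?U = c" using c by (simp add: card_Diff_singleton)
    ultimately have "x ^ c * \<Prod>?U = \<Prod>?U" by (simp add: prod.distrib)
    moreover have "\<Prod>?U \<noteq> 0" by simp
    ultimately have "x ^ c = 1" by simp
    then show ?thesis unfolding c by simp
  qed (simp add: c)
qed

locale field_extension =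
  fixes \<phi> :: "'a::{field,finite} \<Rightarrow> 'b::{field,finite}" and q m :: nat
  assumes q_card: "q = card (UNIV :: 'a set)"
    and q_prime_power: "\<exists>p k. prime p \<and> 0 < k \<and> q = p ^ k"
    and m_pos: "0 < m"
    and ext_card: "card (UNIV :: 'b set) = q ^ m"
    and hom_add: "\<And>a b. \<phi> (a + b) = \<phi> a + \<phi> b"
    and hom_mult: "\<And>a b. \<phi> (a * b) = \<phi> a * \<phi> b"
    and hom_one: "\<phi> 1 = 1"
begin

lemma hom_zero: "\<phi> 0 = 0"
  using hom_add[of 0 0] by (metis add_cancel_right_right)

lemma hom_sum: "\<phi> (sum f A) = (\<Sum>x\<in>A. \<phi> (f x))"
  by (induction A rule: infinite_finite_induct) (auto simp: hom_zero hom_add)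

lemma hom_of_nat: "\<phi> (of_nat k) = of_nat k"
  by (induction k) (auto simp: hom_zero hom_add hom_one)

lemma hom_power: "\<phi> (a ^ k) = \<phi> a ^ k"
  by (induction k) (auto simp: hom_one hom_mult)

lemma hom_eq_0_iff: "\<phi> a = 0 \<longleftrightarrow> a = 0"
proof
  assume "\<phi> a = 0"
  show "a = 0"
  proof (rule ccontr)
    assume "a \<noteq> 0"
    then have "\<phi> a * \<phi> (inverse a) = 1" by (simp flip: hom_mult add: hom_one)
    with \<open>\<phi> a = 0\<close> show False by simp
  qed
qed (simp add: hom_zero)

lemma inj_hom: "inj \<phi>"
proof (rule injI)
  fix a b assume "\<phi> a = \<phi> b"
  then have "\<phi> (a - b) = 0" using hom_add[of "a - b" b] by simp
  then show "a = b" by (simp add: hom_eq_0_iff)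
qed

lemma q_ge_2: "q \<ge> 2"
proof -
  obtain p k where pk: "prime p" "0 < k" "q = p ^ k" using q_prime_power by blast
  have "2 \<le> p" using pk(1) by (rule prime_ge_2_nat)
  moreover have "p \<le> p ^ k" using pk(2) \<open>2 \<le> p\<close> by (simp add: self_le_power)
  ultimately show ?thesis using pk(3) by simp
qed

lemma of_nat_q_ext: "of_nat q = (0::'b)"
proof -
  have "of_nat q = (0::'a)"
    unfolding q_card of_nat_eq_0_iff_char_dvd by (rule CHAR_dvd_CARD)
  then show ?thesis using hom_of_nat[of q] hom_zero by simp
qed

lemma q_power_of_char: "prime CHAR('b)" "\<exists>k. q = CHAR('b) ^ k"
proof -
  show char: "prime CHAR('b)"
    by (rule prime_CHAR_semidom) (simp add: finite_imp_CHAR_pos)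
  obtain p k where pk: "prime p" "0 < k" "q = p ^ k" using q_prime_power by blast
  have "CHAR('b) dvd p ^ k"
    using of_nat_q_ext pk(3) by (simp only: of_nat_eq_0_iff_char_dvd)
  then have "CHAR('b) dvd p" using char prime_dvd_power by blast
  then have "CHAR('b) = p" using char pk(1) by (simp add: primes_dvd_imp_eq)
  then show "\<exists>k. q = CHAR('b) ^ k" using pk by blast
qed

lemma frobenius_sum: "(sum f A :: 'b) ^ (q ^ j) = (\<Sum>i\<in>A. f i ^ (q ^ j))"
proof -
  obtain k where k: "q = CHAR('b) ^ k" using q_power_of_char by blast
  show ?thesis
    by (rule freshmans_dream_sum'[OF q_power_of_char(1), where n = "k * j"])
       (simp add: k power_mult)
qed

lemma power_q_base: "(x::'a) ^ q = x"
  unfolding q_card by (rule finite_field_power_card)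

lemma power_q_m_ext: "(z::'b) ^ (q ^ m) = z"
  unfolding ext_card[symmetric] by (rule finite_field_power_card)

lemma hom_frobenius_fixed: "\<phi> c ^ (q ^ j) = \<phi> c"
proof (induction j)
  case (Suc j)
  have "\<phi> c ^ (q ^ Suc j) = (\<phi> c ^ (q ^ j)) ^ q" by (simp only: power_Suc2 power_mult)
  also have "\<dots> = \<phi> (c ^ q)" using Suc by (simp add: hom_power)
  finally show ?case by (simp add: power_q_base)
qed simp

lemma range_hom: "range \<phi> = {z. z ^ q = z}"
proof -
  define p :: "'b poly" where "p = monom 1 q - monom 1 1"
  have "coeff p q = 1" unfolding p_def using q_ge_2 by simp
  then have "p \<noteq> 0" by auto
  have "degree p \<le> q"
    unfolding p_def using q_ge_2 degree_monom_le[of "1::'b"]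
    by (intro order.trans[OF degree_diff_le_max]) (simp add: le_trans[OF degree_monom_le])
  moreover have "{z. poly p z = 0} = {z. z ^ q = z}" unfolding p_def by (auto simp: poly_monom)
  ultimately have "card {z::'b. z ^ q = z} \<le> q"
    using card_poly_roots_bound[OF \<open>p \<noteq> 0\<close>] by simp
  moreover have "range \<phi> \<subseteq> {z. z ^ q = z}" using hom_frobenius_fixed[of _ 1] by auto
  moreover have "card (range \<phi>) = q" using inj_hom q_card by (simp add: card_image)
  ultimately show ?thesis using card_seteq[of "{z. z ^ q = z}" "range \<phi>"] by simp
qed

definition hom_inv :: "'b \<Rightarrow> 'a" where "hom_inv = inv_into UNIV \<phi>"

lemma hom_hom_inv: "z ^ q = z \<Longrightarrow> \<phi> (hom_inv z) = z"
  unfolding hom_inv_def by (intro f_inv_into_f) (simp add: range_hom)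

definition trace :: "'b \<Rightarrow> 'b" where "trace w = (\<Sum>k<m. w ^ (q ^ k))"

lemma trace_power_q: "trace w ^ q = trace w"
proof -
  have "trace w ^ q = (\<Sum>k<m. (w ^ (q ^ k)) ^ q)"
    using frobenius_sum[of _ _ 1] unfolding trace_def by simp
  also have "\<dots> = (\<Sum>k<m. w ^ (q ^ Suc k))"
    by (simp add: power_mult[symmetric] mult.commute)
  also have "\<dots> = (\<Sum>k<Suc m. w ^ (q ^ k)) - w"
    by (subst sum.lessThan_Suc_shift) simp
  also have "\<dots> = trace w"
    unfolding trace_def by (simp add: power_q_m_ext)
  finally show ?thesis .
qed

lemma trace_sum: "trace (sum f A) = (\<Sum>i\<in>A. trace (f i))"
  unfolding trace_def by (simp add: frobenius_sum sum.swap[of _ A])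

lemma trace_hom_scale: "trace (\<phi> c * w) = \<phi> c * trace w"
  unfolding trace_def by (simp add: power_mult_distrib hom_frobenius_fixed sum_distrib_left)

lemma trace_zero: "trace 0 = 0"
  unfolding trace_def using q_ge_2 by (simp add: power_0_left)

text \<open>The polynomial \<open>\<Sum>k<m. c k * X ^ q ^ k\<close> is nonzero of degree below \<open>q ^ m\<close>, the size of
  the field.\<close>
lemma q_polynomial_nonvanishing:
  fixes c :: "nat \<Rightarrow> 'b"
  assumes "c 0 \<noteq> 0"
  shows "\<exists>\<beta>. (\<Sum>k<m. c k * \<beta> ^ (q ^ k)) \<noteq> 0"
proof -
  define p where "p = (\<Sum>k<m. monom (c k) (q ^ k))"
  have "coeff p 1 = (\<Sum>k<m. if q ^ k = 1 then c k else 0)"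
    unfolding p_def by (simp add: coeff_sum)
  also have "\<dots> = (\<Sum>k\<in>{0}. c k)"
    using m_pos q_ge_2 by (intro sum.mono_neutral_cong_right) auto
  finally have "p \<noteq> 0" using assms by auto
  have "degree p \<le> q ^ (m - 1)"
  proof (rule degree_le, intro allI impI)
    fix i assume "q ^ (m - 1) < i"
    moreover have "q ^ k \<le> q ^ (m - 1)" if "k < m" for k
      using that q_ge_2 by (intro power_increasing) auto
    ultimately show "coeff p i = 0"
      unfolding p_def coeff_sum by (intro sum.neutral) fastforce
  qed
  moreover have "q ^ (m - 1) < q ^ m" using q_ge_2 m_pos by (intro power_strict_increasing) auto
  ultimately have "card {x. poly p x = 0} < card (UNIV :: 'b set)"
    using card_poly_roots_bound[OF \<open>p \<noteq> 0\<close>] ext_card by linarith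
  then have "{x. poly p x = 0} \<noteq> UNIV" by auto
  then show ?thesis unfolding p_def by (auto simp: poly_sum poly_monom)
qed

end

definition bicyclic_code ::
  "('a::zero \<Rightarrow> 'b::comm_ring_1) \<Rightarrow> 'b \<Rightarrow> nat \<Rightarrow> (nat \<times> nat) set \<Rightarrow> (nat \<Rightarrow> nat \<Rightarrow> 'a) set" where
  "bicyclic_code \<phi> \<alpha> n Z = {c \<in> arrays n. \<forall>(x, y)\<in>Z. bicyc_eval \<phi> \<alpha> n c x y = 0}"

definition has_antipodal_pair :: "nat \<Rightarrow> (nat \<times> nat) set \<Rightarrow> bool" where
  "has_antipodal_pair n Z \<longleftrightarrow> (\<exists>(x, y)\<in>Z. \<exists>(a, b)\<in>Z. n dvd x + a \<and> n dvd y + b)"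

locale bicyclic_setting = field_extension \<phi> q m
  for \<phi> :: "'a::{field,finite} \<Rightarrow> 'b::{field,finite}" and q m +
  fixes \<alpha> :: 'b and n :: nat
  assumes n_def: "n = q ^ m - 1"
    and alpha_n: "\<alpha> ^ n = 1"
    and alpha_primitive: "\<forall>k. 0 < k \<and> k < n \<longrightarrow> \<alpha> ^ k \<noteq> 1"
begin

lemma n_pos: "n \<ge> 1"
proof -
  have "q \<le> q ^ m" using q_ge_2 m_pos by (simp add: self_le_power)
  then show ?thesis using n_def q_ge_2 by simp
qed

lemma of_nat_n: "(of_nat n :: 'b) = - 1"
proof -
  have "n + 1 = q ^ m" using n_def n_pos by simp
  then have "(of_nat n :: 'b) + 1 = of_nat q ^ m" by (metis of_nat_1 of_nat_add of_nat_power)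
  then show ?thesis using of_nat_q_ext m_pos by (simp add: power_0_left eq_neg_iff_add_eq_0)
qed

lemma alpha_power_mod: "\<alpha> ^ s = \<alpha> ^ (s mod n)"
proof -
  have "\<alpha> ^ s = (\<alpha> ^ n) ^ (s div n) * \<alpha> ^ (s mod n)"
    by (simp flip: power_mult power_add)
  then show ?thesis by (simp add: alpha_n)
qed

lemma sum_alpha_powers: "(\<Sum>i<n. \<alpha> ^ (i * s)) = (if n dvd s then - 1 else 0)"
proof (cases "n dvd s")
  case True
  then have "\<alpha> ^ s = 1" using alpha_power_mod[of s] by simp
  then show ?thesis using True of_nat_n by (simp add: mult.commute[of _ s] power_mult)
next
  case False
  have "0 < s mod n" "s mod n < n"
    using False n_pos by (simp_all add: mod_greater_zero_iff_not_dvd)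
  then have "\<alpha> ^ s \<noteq> 1" using alpha_power_mod[of s] alpha_primitive by simp
  moreover have "(\<alpha> ^ s) ^ n - 1 = (\<alpha> ^ s - 1) * (\<Sum>i<n. (\<alpha> ^ s) ^ i)"
    by (rule power_diff_1_eq)
  moreover have "(\<alpha> ^ s) ^ n = 1" by (simp flip: power_mult add: mult.commute power_mult alpha_n)
  ultimately show ?thesis using False by (simp add: power_mult[symmetric] mult.commute)
qed

text \<open>The array \<open>trace_array \<beta> x y\<close> pairs with any \<open>c\<close> to \<open>trace (\<beta> * c(\<alpha>^x, \<alpha>^y))\<close>, and its
  value at \<open>(\<alpha>^a, \<alpha>^b)\<close> is zero unless \<open>(a, b)\<close> is antipodal to a point of the cyclotomic
  coset of \<open>(x, y)\<close>; these two facts drive both directions of the duality.\<close>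
definition trace_array :: "'b \<Rightarrow> nat \<Rightarrow> nat \<Rightarrow> nat \<Rightarrow> nat \<Rightarrow> 'a" where
  "trace_array \<beta> x y i j =
     (if i < n \<and> j < n then hom_inv (trace (\<beta> * \<alpha> ^ (i * x) * \<alpha> ^ (j * y))) else 0)"

lemma trace_array_in_arrays: "trace_array \<beta> x y \<in> arrays n"
  unfolding arrays_def trace_array_def by auto

lemma hom_trace_array:
  "i < n \<Longrightarrow> j < n \<Longrightarrow> \<phi> (trace_array \<beta> x y i j) = trace (\<beta> * \<alpha> ^ (i * x) * \<alpha> ^ (j * y))"
  unfolding trace_array_def by (simp add: hom_hom_inv trace_power_q)

lemma hom_pairing_trace_array:
  "\<phi> (\<Sum>i<n. \<Sum>j<n. c i j * trace_array \<beta> x y i j) = trace (\<beta> * bicyc_eval \<phi> \<alpha> n c x y)"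
proof -
  have "\<phi> (\<Sum>i<n. \<Sum>j<n. c i j * trace_array \<beta> x y i j)
      = (\<Sum>i<n. \<Sum>j<n. trace (\<beta> * (\<phi> (c i j) * \<alpha> ^ (i * x) * \<alpha> ^ (j * y))))"
    by (simp add: hom_sum hom_mult hom_trace_array trace_hom_scale[symmetric] mult_ac)
  also have "\<dots> = trace (\<beta> * bicyc_eval \<phi> \<alpha> n c x y)"
    unfolding bicyc_eval_def by (simp add: trace_sum sum_distrib_left)
  finally show ?thesis .
qed

lemma bicyc_eval_trace_array:
  "bicyc_eval \<phi> \<alpha> n (trace_array \<beta> x y) a b =
   (\<Sum>k<m. if n dvd x * q ^ k + a \<and> n dvd y * q ^ k + b then \<beta> ^ (q ^ k) else 0)"
proof -
  have expand: "trace (\<beta> * \<alpha> ^ (i * x) * \<alpha> ^ (j * y)) * \<alpha> ^ (i * a) * \<alpha> ^ (j * b) =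
      (\<Sum>k<m. \<beta> ^ (q ^ k) * (\<alpha> ^ (i * (x * q ^ k + a)) * \<alpha> ^ (j * (y * q ^ k + b))))" for i j
    unfolding trace_def sum_distrib_right
    by (intro sum.cong refl)
       (simp add: power_add power_mult[symmetric] algebra_simps)
  have "bicyc_eval \<phi> \<alpha> n (trace_array \<beta> x y) a b =
      (\<Sum>i<n. \<Sum>j<n. \<Sum>k<m. \<beta> ^ (q ^ k) * (\<alpha> ^ (i * (x * q ^ k + a)) * \<alpha> ^ (j * (y * q ^ k + b))))"
    unfolding bicyc_eval_def by (intro sum.cong refl) (simp add: hom_trace_array expand)
  also have "\<dots> = (\<Sum>k<m. \<Sum>i<n. \<Sum>j<n.
      \<beta> ^ (q ^ k) * (\<alpha> ^ (i * (x * q ^ k + a)) * \<alpha> ^ (j * (y * q ^ k + b))))"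
    by (simp add: sum.swap[of _ "{..<n}" "{..<m}"])
  also have "\<dots> = (\<Sum>k<m. \<beta> ^ (q ^ k) *
      ((\<Sum>i<n. \<alpha> ^ (i * (x * q ^ k + a))) * (\<Sum>j<n. \<alpha> ^ (j * (y * q ^ k + b)))))"
    by (intro sum.cong refl) (subst sum_product, simp only: sum_distrib_left mult.assoc)
  also have "\<dots> = (\<Sum>k<m. if n dvd x * q ^ k + a \<and> n dvd y * q ^ k + b then \<beta> ^ (q ^ k) else 0)"
    by (intro sum.cong refl) (simp add: sum_alpha_powers)
  finally show ?thesis .
qed

lemma dual_subset_if_no_antipodal_pair:
  assumes closed: "\<And>x y k. (x, y) \<in> Z \<Longrightarrow> ((x * q ^ k) mod n, (y * q ^ k) mod n) \<in> Z"
    and no_pair: "\<not> has_antipodal_pair n Z"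
  shows "euclid_dual n (bicyclic_code \<phi> \<alpha> n Z) \<subseteq> bicyclic_code \<phi> \<alpha> n Z"
proof
  fix u assume "u \<in> euclid_dual n (bicyclic_code \<phi> \<alpha> n Z)"
  then have u: "u \<in> arrays n"
    and orth: "\<And>v. v \<in> bicyclic_code \<phi> \<alpha> n Z \<Longrightarrow> (\<Sum>i<n. \<Sum>j<n. u i j * v i j) = 0"
    unfolding euclid_dual_def by auto
  have "bicyc_eval \<phi> \<alpha> n u x y = 0" if xy: "(x, y) \<in> Z" for x y
  proof (rule ccontr)
    define E where "E = bicyc_eval \<phi> \<alpha> n u x y"
    assume "bicyc_eval \<phi> \<alpha> n u x y \<noteq> 0"
    then obtain \<beta> where "(\<Sum>k<m. E ^ (q ^ k) * \<beta> ^ (q ^ k)) \<noteq> 0"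
      using q_polynomial_nonvanishing[of "\<lambda>k. E ^ (q ^ k)"] unfolding E_def by auto
    then have trace_E: "trace (\<beta> * E) \<noteq> 0"
      unfolding trace_def by (simp add: power_mult_distrib mult.commute)
    have "trace_array \<beta> x y \<in> bicyclic_code \<phi> \<alpha> n Z"
      unfolding bicyclic_code_def
    proof (intro CollectI conjI trace_array_in_arrays ballI, clarify)
      fix a b assume ab: "(a, b) \<in> Z"
      have "\<not> (n dvd x * q ^ k + a \<and> n dvd y * q ^ k + b)" for k
      proof
        assume "n dvd x * q ^ k + a \<and> n dvd y * q ^ k + b"
        then have "n dvd (x * q ^ k) mod n + a" "n dvd (y * q ^ k) mod n + b"
          by (simp_all add: dvd_eq_mod_eq_0 mod_add_left_eq)
        then show False using no_pair closed[OF xy, of k] ab unfolding has_antipodal_pair_def by blast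
      qed
      then show "bicyc_eval \<phi> \<alpha> n (trace_array \<beta> x y) a b = 0"
        unfolding bicyc_eval_trace_array by (intro sum.neutral) auto
    qed
    then have "\<phi> (\<Sum>i<n. \<Sum>j<n. u i j * trace_array \<beta> x y i j) = 0"
      using orth hom_zero by simp
    then show False using trace_E unfolding hom_pairing_trace_array E_def by simp
  qed
  then show "u \<in> bicyclic_code \<phi> \<alpha> n Z" unfolding bicyclic_code_def using u by auto
qed

lemma dual_not_subset_if_antipodal_pair:
  assumes "has_antipodal_pair n Z"
  shows "\<not> euclid_dual n (bicyclic_code \<phi> \<alpha> n Z) \<subseteq> bicyclic_code \<phi> \<alpha> n Z"
proof -
  obtain x y a b where xy: "(x, y) \<in> Z" and ab: "(a, b) \<in> Z" and dvd: "n dvd x + a" "n dvd y + b"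
    using assms unfolding has_antipodal_pair_def by blast
  define c where "c k = (if n dvd x * q ^ k + a \<and> n dvd y * q ^ k + b then 1 else (0::'b))" for k
  have "c 0 \<noteq> 0" unfolding c_def using dvd by simp
  then obtain \<beta> where \<beta>: "(\<Sum>k<m. c k * \<beta> ^ (q ^ k)) \<noteq> 0"
    using q_polynomial_nonvanishing by blast
  have "trace_array \<beta> x y \<in> euclid_dual n (bicyclic_code \<phi> \<alpha> n Z)"
    unfolding euclid_dual_def
  proof (intro CollectI conjI trace_array_in_arrays ballI)
    fix v assume "v \<in> bicyclic_code \<phi> \<alpha> n Z"
    then have "bicyc_eval \<phi> \<alpha> n v x y = 0" using xy unfolding bicyclic_code_def by auto
    then have "\<phi> (\<Sum>i<n. \<Sum>j<n. v i j * trace_array \<beta> x y i j) = 0"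
      unfolding hom_pairing_trace_array by (simp add: trace_zero)
    then show "(\<Sum>i<n. \<Sum>j<n. trace_array \<beta> x y i j * v i j) = 0"
      by (simp add: hom_eq_0_iff mult.commute)
  qed
  moreover have "bicyc_eval \<phi> \<alpha> n (trace_array \<beta> x y) a b = (\<Sum>k<m. c k * \<beta> ^ (q ^ k))"
    unfolding bicyc_eval_trace_array c_def by (intro sum.cong refl) simp
  then have "bicyc_eval \<phi> \<alpha> n (trace_array \<beta> x y) a b \<noteq> 0" using \<beta> by simp
  then have "trace_array \<beta> x y \<notin> bicyclic_code \<phi> \<alpha> n Z"
    using ab unfolding bicyclic_code_def by auto
  ultimately show ?thesis by blast
qed

end

lemma hyperbolic_code_eq_bicyclic_code:
  "hyperbolic_code \<phi> \<alpha> q n d = bicyclic_code \<phi> \<alpha> n (hyperbolic_zeros q n d)"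
  unfolding hyperbolic_code_def bicyclic_code_def ..

lemma hyperbolic_zeros_closed:
  assumes "(x, y) \<in> hyperbolic_zeros q n d"
  shows "((x * q ^ k) mod n, (y * q ^ k) mod n) \<in> hyperbolic_zeros q n d"
proof -
  from assms obtain x0 y0 j where des: "(x0, y0) \<in> designed_set n d"
    and xy: "x = (x0 * q ^ j) mod n" "y = (y0 * q ^ j) mod n"
    unfolding hyperbolic_zeros_def cyc_coset_def by auto
  have "(x * q ^ k) mod n = (x0 * q ^ (j + k)) mod n" "(y * q ^ k) mod n = (y0 * q ^ (j + k)) mod n"
    unfolding xy by (simp_all add: mod_mult_left_eq power_add mult.assoc)
  then show ?thesis unfolding hyperbolic_zeros_def cyc_coset_def using des by blast
qed

locale hyperbolic_parameters =
  fixes q m n :: nat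
  assumes q_ge_2: "q \<ge> 2" and m_gt_3: "m > 3" and n_def: "n = q ^ m - 1"
begin

lemma q_power_m: "q ^ m = n + 1"
  using n_def q_ge_2 by simp

lemma n_ge_2: "n \<ge> 2"
proof -
  have "(2::nat) ^ 2 \<le> 2 ^ m" using m_gt_3 by (intro power_increasing) auto
  also have "\<dots> \<le> q ^ m" using q_ge_2 by (simp add: power_mono)
  finally show ?thesis using n_def by simp
qed

lemma q_power_cong: "j mod m = j' mod m \<Longrightarrow> [q ^ j = q ^ j'] (mod n)"
proof -
  have "[q ^ m = 1] (mod n)" unfolding q_power_m cong_def using n_ge_2 by (simp add: mod_Suc)
  have "[q ^ j = q ^ (j mod m)] (mod n)" for j
  proof -
    have "[(q ^ m) ^ (j div m) * q ^ (j mod m) = 1 ^ (j div m) * q ^ (j mod m)] (mod n)"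
      using \<open>[q ^ m = 1] (mod n)\<close> by (intro cong_mult cong_pow cong_refl)
    then show ?thesis by (simp flip: power_mult power_add)
  qed
  then show "j mod m = j' mod m \<Longrightarrow> [q ^ j = q ^ j'] (mod n)"
    by (metis cong_sym cong_trans)
qed

text \<open>As \<open>q ^ m \<equiv> 1 (mod n)\<close>, multiplying by a suitable power of \<open>q\<close> moves \<open>k1\<close> to \<open>0\<close>.\<close>
lemma normalize_exponents:
  obtains k where "k < m"
    "\<And>x0 x1. n dvd x0 * q ^ k1 + x1 * q ^ k2 \<Longrightarrow> n dvd x0 + q ^ k * x1 \<and> n dvd q ^ (m - k) * x0 + x1"
proof
  define t where "t = m - k1 mod m"
  define k where "k = (k2 + t) mod m"
  show "k < m" unfolding k_def using m_gt_3 by simp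
  fix x0 x1 assume "n dvd x0 * q ^ k1 + x1 * q ^ k2"
  then have "[(x0 * q ^ k1 + x1 * q ^ k2) * q ^ t = 0 * q ^ t] (mod n)"
    by (intro cong_mult cong_refl) (simp add: cong_0_iff)
  then have shifted: "[x0 * q ^ (k1 + t) + x1 * q ^ (k2 + t) = 0] (mod n)"
    by (simp add: power_add algebra_simps)
  have "(k1 + t) mod m = 0 mod m"
  proof -
    have "k1 mod m + t = m" unfolding t_def using m_gt_3 by simp
    then show ?thesis by (metis mod_add_left_eq mod_self mod_0)
  qed
  then have "[q ^ (k1 + t) = q ^ 0] (mod n)" by (rule q_power_cong)
  moreover have "[q ^ (k2 + t) = q ^ k] (mod n)" unfolding k_def by (rule q_power_cong) simp
  ultimately have "[x0 * q ^ (k1 + t) + x1 * q ^ (k2 + t) = x0 * q ^ 0 + x1 * q ^ k] (mod n)"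
    by (intro cong_add cong_mult cong_refl)
  from cong_trans[OF cong_sym[OF this] shifted]
  have first: "[x0 + x1 * q ^ k = 0] (mod n)" by simp
  then have "[(x0 + x1 * q ^ k) * q ^ (m - k) = 0 * q ^ (m - k)] (mod n)"
    by (intro cong_mult cong_refl)
  then have "[x0 * q ^ (m - k) + x1 * q ^ (k + (m - k)) = 0] (mod n)"
    by (simp add: power_add algebra_simps)
  moreover have "[q ^ (k + (m - k)) = q ^ 0] (mod n)" using \<open>k < m\<close> by (intro q_power_cong) simp
  then have "[x0 * q ^ (m - k) + x1 * q ^ (k + (m - k)) = x0 * q ^ (m - k) + x1 * q ^ 0] (mod n)"
    by (intro cong_add cong_mult cong_refl)
  ultimately have "[x0 * q ^ (m - k) + x1 = 0] (mod n)"
    using cong_trans[OF cong_sym] by force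
  with first show "n dvd x0 + q ^ k * x1 \<and> n dvd q ^ (m - k) * x0 + x1"
    by (simp add: cong_0_iff mult.commute)
qed

lemma hyperbolic_zerosE:
  assumes "(x, y) \<in> hyperbolic_zeros q n d"
  obtains X Y k where "1 \<le> X" "X \<le> n" "1 \<le> Y" "Y \<le> n" "X * Y < d"
    "x = ((X mod n) * q ^ k) mod n" "y = ((Y mod n) * q ^ k) mod n"
  using assms unfolding hyperbolic_zeros_def cyc_coset_def designed_set_def by blast

lemma hyperbolic_zerosI:
  assumes "1 \<le> X" "X \<le> n" "1 \<le> Y" "Y \<le> n" "X * Y < d"
  shows "(((X mod n) * q ^ k) mod n, ((Y mod n) * q ^ k) mod n) \<in> hyperbolic_zeros q n d"
  using assms unfolding hyperbolic_zeros_def cyc_coset_def designed_set_def by blast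

definition delta :: nat where
  "delta = (if even m then (q ^ (m div 2) - 1) ^ 2 else (q ^ m - 1) - q ^ ((m - 1) div 2))"

lemma even_half_power:
  assumes "even m"
  shows "q ^ (m div 2) * q ^ (m div 2) = n + 1" "q ^ (m div 2) \<ge> 2"
proof -
  have "m div 2 + m div 2 = m" using assms by auto
  then show "q ^ (m div 2) * q ^ (m div 2) = n + 1" unfolding q_power_m[symmetric] by (simp flip: power_add)
  have "q \<le> q ^ (m div 2)" using m_gt_3 q_ge_2 by (simp add: self_le_power)
  then show "q ^ (m div 2) \<ge> 2" using q_ge_2 by simp
qed

lemma odd_half_power:
  assumes "odd m"
  shows "n + 1 = q * (q ^ ((m - 1) div 2))^2" "q ^ ((m - 1) div 2) \<ge> 4"
proof -
  define h where "h = (m - 1) div 2"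
  have mh: "m = Suc (h + h)" using assms unfolding h_def by presburger
  then show "n + 1 = q * (q ^ ((m - 1) div 2))^2"
    unfolding q_power_m[symmetric] h_def[symmetric] by (simp add: power2_eq_square power_add)
  have "(2::nat) ^ 2 \<le> 2 ^ h" using m_gt_3 mh by (intro power_increasing) auto
  also have "\<dots> \<le> q ^ h" using q_ge_2 by (simp add: power_mono)
  finally show "q ^ ((m - 1) div 2) \<ge> 4" unfolding h_def by simp
qed

lemma antipodal_product_bound:
  fixes X X' Y Y' k :: nat
  assumes k: "k < m" and pos: "1 \<le> X" "1 \<le> X'" "1 \<le> Y" "1 \<le> Y'"
    and cx: "n \<le> X + q ^ k * X'" "n \<le> q ^ (m - k) * X + X'"
    and cy: "n \<le> Y + q ^ k * Y'" "n \<le> q ^ (m - k) * Y + Y'"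
  shows "delta \<le> X * Y \<or> delta \<le> X' * Y'"
proof -
  define K K' where "K = q ^ k" and "K' = q ^ (m - k)"
  have KK: "int K * int K' = int n + 1"
    unfolding K_def K'_def using k q_power_m by (simp flip: power_add of_nat_mult of_nat_power)
  have K: "int K \<ge> 1" "int K' \<ge> 1" unfolding K_def K'_def using q_ge_2 by simp_all
  have icx: "int n \<le> int X + int K * int X'" "int n \<le> int K' * int X + int X'"
    using cx unfolding K_def K'_def
    by (simp_all only: of_nat_add[symmetric] of_nat_mult[symmetric] of_nat_le_iff)
  have icy: "int n \<le> int Y + int K * int Y'" "int n \<le> int K' * int Y + int Y'"
    using cy unfolding K_def K'_def
    by (simp_all only: of_nat_add[symmetric] of_nat_mult[symmetric] of_nat_le_iff)
  show ?thesis
  proof (cases "even m")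
    case True
    define Q where "Q = q ^ (m div 2)"
    note half = even_half_power[OF True, folded Q_def]
    have Q: "int Q \<ge> 2" "int n = (int Q)^2 - 1"
      using half arg_cong[OF half(1), of int] by (simp_all add: power2_eq_square)
    have "int delta = (int Q - 1)^2"
      unfolding delta_def using True half(2) by (simp add: Q_def)
    moreover have "(int Q - 1)^2 \<le> int X * int Y \<or> (int Q - 1)^2 \<le> int X' * int Y'"
      using Q KK K by (intro even_product_bound[OF Q(1) Q(2) _ K icx icy]) (use pos in auto)
    ultimately show ?thesis by (metis of_nat_le_iff of_nat_mult)
  next
    case False
    then have m_odd: "odd m" .
    define Q0 where "Q0 = q ^ ((m - 1) div 2)"
    note half = odd_half_power[OF False, folded Q0_def]
    have Q0n: "Q0 \<le> n"
    proof -
      have "Q0 < 2 * Q0^2" using half(2) by (simp add: power2_eq_square)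
      also have "\<dots> \<le> q * Q0^2" using q_ge_2 by simp
      finally show ?thesis using half(1) by simp
    qed
    have "delta = n - Q0" unfolding delta_def Q0_def n_def using False by simp
    then have "int delta = int n - int Q0" using Q0n by simp
    moreover have "K \<le> Q0 \<or> K' \<le> Q0"
      unfolding K_def K'_def Q0_def using m_odd q_ge_2
      by (cases "k \<le> (m - 1) div 2") (auto intro!: power_increasing elim: oddE)
    then have "int n - int Q0 \<le> int X * int Y \<or> int n - int Q0 \<le> int X' * int Y'"
      using q_ge_2 half arg_cong[OF half(1), of int] pos
      by (intro odd_product_bound[of "int q" "int Q0", OF _ _ _ KK K _ icx icy]) auto
    ultimately show ?thesis by (metis of_nat_le_iff of_nat_mult)
  qed
qed

lemma delta_less_n: "delta < n"
proof (cases "even m")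
  case True
  define Q where "Q = q ^ (m div 2)"
  note half = even_half_power[OF True, folded Q_def]
  have "(Q - 1) * (Q - 1) < (Q - 1) * Q" using half(2) by simp
  also have "\<dots> = Q * Q - Q" by (simp add: diff_mult_distrib)
  also have "\<dots> < Q * Q - 1" using half(2) le_square[of Q] by linarith
  finally show ?thesis unfolding delta_def using True half(1) by (simp add: Q_def power2_eq_square)
next
  case False
  then show ?thesis
    unfolding delta_def n_def[symmetric] using odd_half_power(2)[OF False] n_ge_2 by simp
qed

lemma no_antipodal_pair_if_le_delta:
  assumes "d \<le> delta"
  shows "\<not> has_antipodal_pair n (hyperbolic_zeros q n d)"
proof
  assume "has_antipodal_pair n (hyperbolic_zeros q n d)"
  then obtain x y a b where "(x, y) \<in> hyperbolic_zeros q n d" "(a, b) \<in> hyperbolic_zeros q n d"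
    and dvd: "n dvd x + a" "n dvd y + b" unfolding has_antipodal_pair_def by blast
  then obtain X Y k1 X' Y' k2 where XY: "1 \<le> X" "1 \<le> Y" "X * Y < d"
      "x = ((X mod n) * q ^ k1) mod n" "y = ((Y mod n) * q ^ k1) mod n"
    and XY': "1 \<le> X'" "1 \<le> Y'" "X' * Y' < d"
      "a = ((X' mod n) * q ^ k2) mod n" "b = ((Y' mod n) * q ^ k2) mod n"
    by (elim hyperbolic_zerosE) blast
  have "d \<le> n" using assms delta_less_n by simp
  moreover have "X \<le> X * Y" "Y \<le> X * Y" "X' \<le> X' * Y'" "Y' \<le> X' * Y'"
    using XY XY' by simp_all
  ultimately have lt: "X < n" "Y < n" "X' < n" "Y' < n" using XY(3) XY'(3) by linarith+
  have "n dvd X * q ^ k1 + X' * q ^ k2" "n dvd Y * q ^ k1 + Y' * q ^ k2"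
    using dvd lt unfolding XY XY' by (simp_all add: dvd_eq_mod_eq_0 mod_add_eq)
  moreover obtain k where "k < m" and normal:
    "\<And>x0 x1. n dvd x0 * q ^ k1 + x1 * q ^ k2 \<Longrightarrow> n dvd x0 + q ^ k * x1 \<and> n dvd q ^ (m - k) * x0 + x1"
    using normalize_exponents by blast
  ultimately have "n dvd X + q ^ k * X'" "n dvd q ^ (m - k) * X + X'"
    "n dvd Y + q ^ k * Y'" "n dvd q ^ (m - k) * Y + Y'" by blast+
  then have "n \<le> X + q ^ k * X'" "n \<le> q ^ (m - k) * X + X'"
    "n \<le> Y + q ^ k * Y'" "n \<le> q ^ (m - k) * Y + Y'"
    using XY(1,2) XY'(1,2) by (auto elim!: dvd_imp_le)
  then have "delta \<le> X * Y \<or> delta \<le> X' * Y'"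
    using antipodal_product_bound[OF \<open>k < m\<close> XY(1) XY'(1) XY(2) XY'(2)] by blast
  then show False using XY(3) XY'(3) assms by linarith
qed

text \<open>With \<open>Q = q ^ (m div 2)\<close>, the designed point \<open>(Q - 1, Q - 1)\<close> and its multiple by \<open>Q\<close> are
  antipodal, since \<open>(Q - 1) + (Q - 1) * Q = n\<close>.\<close>
lemma antipodal_pair_if_gt_delta_even:
  assumes "even m" and "delta < d"
  shows "has_antipodal_pair n (hyperbolic_zeros q n d)"
proof -
  define Q where "Q = q ^ (m div 2)"
  note half = even_half_power[OF assms(1), folded Q_def]
  have "(Q - 1) * Q + Q = n + 1" using half(1) le_square[of Q] by (simp add: diff_mult_distrib)
  then have sum: "Q - 1 + (Q - 1) * Q = n" using half(2) by linarith
  have "delta = (Q - 1) * (Q - 1)" unfolding delta_def Q_def using assms(1) by (simp add: power2_eq_square)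
  then have "(Q - 1) * (Q - 1) < d" using assms(2) by simp
  moreover have "1 \<le> Q - 1" "Q - 1 \<le> (Q - 1) * Q" using half(2) by simp_all
  then have "Q - 1 < n" "(Q - 1) * Q < n" using sum by linarith+
  moreover have "(((Q - 1) mod n) * q ^ 0) mod n = Q - 1"
    "(((Q - 1) mod n) * q ^ (m div 2)) mod n = (Q - 1) * Q"
    using \<open>Q - 1 < n\<close> \<open>(Q - 1) * Q < n\<close> by (simp_all add: Q_def)
  ultimately have "(Q - 1, Q - 1) \<in> hyperbolic_zeros q n d"
    "((Q - 1) * Q, (Q - 1) * Q) \<in> hyperbolic_zeros q n d"
    using hyperbolic_zerosI[of "Q - 1" "Q - 1" d 0] hyperbolic_zerosI[of "Q - 1" "Q - 1" d "m div 2"]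
      half(2) by auto
  moreover have "n dvd (Q - 1) + (Q - 1) * Q" using sum by simp
  ultimately show ?thesis unfolding has_antipodal_pair_def by blast
qed

text \<open>With \<open>m = 2h + 1\<close> and \<open>Q0 = q ^ h\<close>, multiplying the designed point \<open>(1, n - q * Q0)\<close> by
  \<open>Q0\<close> gives \<open>(Q0, -1)\<close> modulo \<open>n\<close>, which is antipodal to the designed point \<open>(n - Q0, 1)\<close>.\<close>
lemma antipodal_pair_if_gt_delta_odd:
  assumes "odd m" and "delta < d"
  shows "has_antipodal_pair n (hyperbolic_zeros q n d)"
proof -
  define h where "h = (m - 1) div 2"
  define Q0 where "Q0 = q ^ h"
  note half = odd_half_power[OF assms(1), folded h_def, folded Q0_def]
  have dl: "delta = n - Q0" unfolding delta_def Q0_def h_def n_def using assms(1) by simp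
  have n1: "n + 1 = q * Q0 * Q0" using half(1) by (simp add: power2_eq_square)
  have "q * Q0 * 4 \<le> q * Q0 * Q0" using half(2) by (intro mult_left_mono) auto
  moreover have "2 * Q0 \<le> q * Q0" using q_ge_2 by simp
  ultimately have qQ: "q * Q0 + 2 \<le> n" and Qn: "Q0 < n" using n1 half(2) by linarith+
  have "(n - q * Q0) * Q0 + (n + 1) = n * Q0"
    using n1 qQ by (simp add: diff_mult_distrib)
  moreover have "n * Q0 = n * (Q0 - 2) + 2 * n" using half(2) by (simp add: algebra_simps)
  ultimately have "(n - q * Q0) * Q0 = n * (Q0 - 2) + (n - 1)" using n_ge_2 by linarith
  moreover have "(n - q * Q0) mod n = n - q * Q0" using qQ q_ge_2 half(2) by simp
  ultimately have "(((n - q * Q0) mod n) * q ^ h) mod n = (n - 1 + n * (Q0 - 2)) mod n"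
    unfolding Q0_def by (simp add: add.commute)
  also have "\<dots> = n - 1" using n_ge_2 by (simp only: mod_mult_self2) simp
  moreover have "((1 mod n) * q ^ h) mod n = Q0" using Qn n_ge_2 unfolding Q0_def by simp
  moreover have "Q0 \<le> q * Q0" using q_ge_2 by simp
  then have "n - q * Q0 < d" using assms(2) dl by linarith
  ultimately have "(Q0, n - 1) \<in> hyperbolic_zeros q n d"
    using hyperbolic_zerosI[of 1 "n - q * Q0" d h] qQ n_ge_2 by simp
  moreover have "(n - Q0, 1) \<in> hyperbolic_zeros q n d"
    using hyperbolic_zerosI[of "n - Q0" 1 d 0] n_ge_2 Qn half(2) assms(2) dl by simp
  moreover have "n dvd Q0 + (n - Q0)" "n dvd (n - 1) + 1" using Qn n_ge_2 by simp_all
  ultimately show ?thesis unfolding has_antipodal_pair_def by blast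
qed

lemma has_antipodal_pair_iff: "has_antipodal_pair n (hyperbolic_zeros q n d) \<longleftrightarrow> delta < d"
proof
  show "delta < d" if "has_antipodal_pair n (hyperbolic_zeros q n d)"
    using that no_antipodal_pair_if_le_delta[of d] by (meson not_le)
  show "has_antipodal_pair n (hyperbolic_zeros q n d)" if "delta < d"
    using that antipodal_pair_if_gt_delta_even antipodal_pair_if_gt_delta_odd by blast
qed

end

theorem theorem3:
  fixes \<phi> :: "'a::{field,finite} \<Rightarrow> 'b::{field,finite}"
    and \<alpha> :: 'b and q m n d :: nat
  assumes q_card: "q = card (UNIV :: 'a set)"
    and q_pp: "\<exists>p k. prime p \<and> 0 < k \<and> q = p ^ k"
    and m_gt: "m > 3"
    and n_def: "n = q ^ m - 1"
    and ext_card: "card (UNIV :: 'b set) = q ^ m"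
    and hom_add: "\<And>a b. \<phi> (a + b) = \<phi> a + \<phi> b"
    and hom_mult: "\<And>a b. \<phi> (a * b) = \<phi> a * \<phi> b"
    and hom_one: "\<phi> 1 = 1"
    and prim1: "\<alpha> ^ n = 1"
    and prim2: "\<forall>k. 0 < k \<and> k < n \<longrightarrow> \<alpha> ^ k \<noteq> 1"
    and d_ge: "d \<ge> 2"
  shows "euclid_dual n (hyperbolic_code \<phi> \<alpha> q n d) \<subseteq> hyperbolic_code \<phi> \<alpha> q n d
     \<longleftrightarrow> d \<le> (if even m then (q ^ (m div 2) - 1) ^ 2 else (q ^ m - 1) - q ^ ((m - 1) div 2))"
proof -
  interpret E: bicyclic_setting \<phi> q m \<alpha> n
    using q_card q_pp m_gt n_def ext_card hom_add hom_mult hom_one prim1 prim2 by unfold_locales auto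
  interpret H: hyperbolic_parameters q m n
    by unfold_locales (use E.q_ge_2 m_gt n_def in auto)
  have "euclid_dual n (hyperbolic_code \<phi> \<alpha> q n d) \<subseteq> hyperbolic_code \<phi> \<alpha> q n d
      \<longleftrightarrow> \<not> has_antipodal_pair n (hyperbolic_zeros q n d)"
    unfolding hyperbolic_code_eq_bicyclic_code
    using E.dual_subset_if_no_antipodal_pair[of "hyperbolic_zeros q n d", OF hyperbolic_zeros_closed]
      E.dual_not_subset_if_antipodal_pair[of "hyperbolic_zeros q n d"] by blast
  also have "\<dots> \<longleftrightarrow> d \<le> H.delta" using H.has_antipodal_pair_iff[of d] by (simp add: not_less)
  finally show ?thesis unfolding H.delta_def .
qed

end
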